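(* Let $X=(x_1,\dots,x_n)$, $n>0$, be a finite sequence of positive reals and $0<q\le1$. For a finite sequence $W$ of length $k$ with sorted values $w_{(1)}\le\dots\le w_{(k)}$, put $Q^1_q(W)=w_{(\lceil qk\rceil)}$. Consider the positive circllhist bins $B_{e,d}=[a,b)$ with $a=d\cdot10^{e-1}$, $b=(d+1)\cdot10^{e-1}$, $e\in\mathbb{Z}$, $d\in\{10,\dots,99\}$, and counts $H(e,d)=\#\{j:x_j\in B_{e,d}\}$. Let $\hat X^p$ be the paretro-midpoint resampling (for each bin, $H(e,d)$ copies of $\frac{2ab}{a+b}$) and $\hat X^f$ the fair resampling (for each bin with $H(e,d)=k$, the points $a+\frac{l}{k+1}(b-a)$, $l=1,\dots,k$). Then: (1) $|Q^1_q(X)-Q^1_q(\hat X^p)|\le\frac1{21}Q^1_q(X)$; (2) $|Q^1_q(X)-Q^1_q(\hat X^f)|\le\frac1{10}Q^1_q(X)$; and if the bin containing $Q^1_q(X)$ contains exactly one element of $X$, then $|Q^1_q(X)-Q^1_q(\hat X^f)|\le\frac{1}{20}Q^1_q(X)$.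
   Context: The resamplings $\hat X^p$ and $\hat X^f$ are finite sequences of length $n$ (taken over all bins). *)

theory Defs
  imports Complex_Main "HOL-Library.Multiset"
begin

definition Q1 :: "real \<Rightarrow> real list \<Rightarrow> real" where
  "Q1 q W = sort W ! (nat \<lceil>q * real (length W)\<rceil> - 1)"

definition bin_lo :: "int \<Rightarrow> nat \<Rightarrow> real" where
  "bin_lo e d = real d * 10 powr (real_of_int e - 1)"

definition bin_hi :: "int \<Rightarrow> nat \<Rightarrow> real" where
  "bin_hi e d = (real d + 1) * 10 powr (real_of_int e - 1)"

definition in_bin :: "int \<Rightarrow> nat \<Rightarrow> real \<Rightarrow> bool" where
  "in_bin e d x \<longleftrightarrow> bin_lo e d \<le> x \<and> x < bin_hi e d"

definition H :: "real list \<Rightarrow> int \<Rightarrow> nat \<Rightarrow> nat" where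
  "H X e d = card {j. j < length X \<and> in_bin e d (X ! j)}"

definition occ_bins :: "real list \<Rightarrow> (int \<times> nat) set" where
  "occ_bins X = {(e, d). d \<in> {10..99} \<and> H X e d \<noteq> 0}"

definition paretro_mid :: "int \<Rightarrow> nat \<Rightarrow> real" where
  "paretro_mid e d = 2 * bin_lo e d * bin_hi e d / (bin_lo e d + bin_hi e d)"

definition resample_p :: "real list \<Rightarrow> real list" where
  "resample_p X = sorted_list_of_multiset
     (\<Sum>(e, d) \<in> occ_bins X. replicate_mset (H X e d) (paretro_mid e d))"

definition fair_points :: "int \<Rightarrow> nat \<Rightarrow> nat \<Rightarrow> real list" where
  "fair_points e d k = map (\<lambda>l. bin_lo e d + real l / (real k + 1) * (bin_hi e d - bin_lo e d)) [1..<k+1]"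

definition resample_f :: "real list \<Rightarrow> real list" where
  "resample_f X = sorted_list_of_multiset
     (\<Sum>(e, d) \<in> occ_bins X. mset (fair_points e d (H X e d)))"

end

theory Submission
  imports Defs
begin

text \<open>Both resamplings put exactly \<open>H(e,d)\<close> points into every bin \<open>B(e,d)\<close>. Hence the
  monotone map sending a positive real to the lower end of its bin takes \<open>X\<close> and its resampling
  to the same multiset, and since order statistics commute with monotone maps, the
  \<open>\<lceil>q n\<rceil>\<close>-th order statistics of \<open>X\<close> and of the resampling lie in the same bin. A bin \<open>[a, b)\<close>
  is narrow, \<open>10 b \<le> 11 a\<close>, which bounds the distance of two of its points by a tenth, their
  distance to the harmonic mean \<open>2ab/(a+b)\<close> by a twenty-first, and their distance to the
  midpoint (the only fair point of a singleton bin) by a twentieth.\<close>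

lemma image_mset_eq_replicate_mset:
  "\<forall>x\<in>set xs. f x = c \<Longrightarrow> image_mset f (mset xs) = replicate_mset (length xs) c"
  by (induction xs) auto

lemma image_mset_sum: "image_mset f (\<Sum>a\<in>A. M a) = (\<Sum>a\<in>A. image_mset f (M a))"
  by (induction A rule: infinite_finite_induct) auto

lemma mset_eq_sum_fibres:
  assumes "finite B" "f ` set xs \<subseteq> B"
  shows "mset xs = (\<Sum>b\<in>B. mset (filter (\<lambda>x. f x = b) xs))"
  using assms(2)
proof (induction xs)
  case Nil
  then show ?case by simp
next
  case (Cons y ys)
  have "(\<Sum>b\<in>B. mset (filter (\<lambda>x. f x = b) (y # ys)))
      = (\<Sum>b\<in>B. if f y = b then {#y#} else {#}) + (\<Sum>b\<in>B. mset (filter (\<lambda>x. f x = b) ys))"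
    by (auto simp: sum.distrib[symmetric] intro!: sum.cong)
  also have "\<dots> = {#y#} + mset ys" using Cons assms(1) by simp
  finally show ?case by simp
qed

lemma map_sort_eq_if_image_mset_eq:
  fixes f :: "'a::linorder \<Rightarrow> 'b::linorder"
  assumes "mono_on A f" "set xs \<subseteq> A" "set ys \<subseteq> A"
    and "image_mset f (mset xs) = image_mset f (mset ys)"
  shows "map f (sort xs) = map f (sort ys)"
proof -
  have "sorted (map f (sort zs))" if "set zs \<subseteq> A" for zs :: "'a list"
    using that by (intro sorted_map_mono) (auto intro: mono_on_subset[OF assms(1)])
  moreover have "mset (map f (sort xs)) = mset (map f (sort ys))" using assms(4) by simp
  ultimately show ?thesis using assms(2,3) by (metis properties_for_sort sorted_sort_id)
qed

lemma Q1_index_less_length: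
  assumes "xs \<noteq> []" "q \<le> 1"
  shows "nat \<lceil>q * real (length xs)\<rceil> - 1 < length xs"
proof -
  have "q * real (length xs) \<le> real (length xs)" using assms by (simp add: mult_le_cancel_right1)
  then have "\<lceil>q * real (length xs)\<rceil> \<le> int (length xs)" by (simp add: ceiling_le)
  then have "nat \<lceil>q * real (length xs)\<rceil> \<le> length xs" by (simp add: nat_le_iff)
  moreover have "0 < length xs" using assms(1) by simp
  ultimately show ?thesis by linarith
qed

lemma Q1_in_set: "xs \<noteq> [] \<Longrightarrow> q \<le> 1 \<Longrightarrow> Q1 q xs \<in> set xs"
  unfolding Q1_def by (metis Q1_index_less_length length_sort nth_mem set_sort)

lemma Q1_image_eq:
  fixes f :: "real \<Rightarrow> 'b::linorder"
  assumes "mono_on A f" "set xs \<subseteq> A" "set ys \<subseteq> A"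
    and "image_mset f (mset xs) = image_mset f (mset ys)"
    and "xs \<noteq> []" "q \<le> 1"
  shows "f (Q1 q xs) = f (Q1 q ys)"
proof -
  define i where "i = nat \<lceil>q * real (length xs)\<rceil> - 1"
  have "length ys = length xs" using arg_cong[OF assms(4), of size] by simp
  then have "Q1 q xs = sort xs ! i" "Q1 q ys = sort ys ! i" unfolding Q1_def i_def by simp_all
  moreover have "i < length xs" unfolding i_def by (rule Q1_index_less_length[OF assms(5,6)])
  ultimately show ?thesis
    using map_sort_eq_if_image_mset_eq[OF assms(1-4)] \<open>length ys = length xs\<close>
    by (metis length_sort nth_map)
qed

lemma abs_diff_le_tenth:
  fixes a b x y :: real
  assumes "a \<le> x" "x < b" "a \<le> y" "y < b" "10 * b \<le> 11 * a"
  shows "\<bar>x - y\<bar> \<le> x / 10"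
  using assms by linarith

lemma abs_diff_midpoint_le:
  fixes a b x :: real
  assumes "a \<le> x" "x < b" "10 * b \<le> 11 * a"
  shows "\<bar>x - (a + b) / 2\<bar> \<le> x / 20"
proof -
  have "19 * x \<le> 10 * a + 10 * b" "10 * a + 10 * b \<le> 21 * x" using assms by linarith+
  then show ?thesis unfolding abs_le_iff by (simp add: field_simps)
qed

lemma harmonic_mean_bounds:
  fixes a b :: real
  assumes "0 < a" "a < b"
  shows "a \<le> 2 * a * b / (a + b)" "2 * a * b / (a + b) < b"
proof -
  have "a * a \<le> a * b" "a * b < b * b" using assms by (simp_all add: mult_strict_right_mono)
  then show "a \<le> 2 * a * b / (a + b)" "2 * a * b / (a + b) < b"
    using assms by (simp_all add: field_simps)
qed

lemma abs_diff_harmonic_mean_le: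
  fixes a b x :: real
  assumes "a \<le> x" "x < b" "10 * b \<le> 11 * a"
  shows "\<bar>x - 2 * a * b / (a + b)\<bar> \<le> x / 21"
proof -
  have "0 < a" "0 < b" using assms by linarith+
  define m where "m = 2 * a * b / (a + b)"
  have m: "m * (a + b) = 2 * a * b" unfolding m_def using \<open>0 < a\<close> \<open>0 < b\<close> by simp
  have "a * (10 * b) \<le> a * (11 * a)" using assms(3) \<open>0 < a\<close> by (intro mult_left_mono) auto
  then have "21 * m * (a + b) \<le> 22 * a * (a + b)"
    using m by (simp only: algebra_simps)
  then have "21 * m \<le> 22 * a" using \<open>0 < a\<close> \<open>0 < b\<close> by simp
  moreover have "b * (10 * b) \<le> b * (11 * a)" using assms(3) \<open>0 < b\<close> by (intro mult_left_mono) auto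
  then have "20 * b * (a + b) \<le> 21 * m * (a + b)"
    using m by (simp only: algebra_simps)
  then have "20 * b \<le> 21 * m" using \<open>0 < a\<close> \<open>0 < b\<close> by simp
  ultimately show ?thesis unfolding m_def[symmetric] using assms(1,2) by linarith
qed

lemma bin_lo_pos: "0 < d \<Longrightarrow> 0 < bin_lo e d"
  unfolding bin_lo_def by simp

lemma bin_lo_less_bin_hi: "bin_lo e d < bin_hi e d"
  unfolding bin_lo_def bin_hi_def by (simp add: distrib_right)

lemma bin_width_le: "10 \<le> d \<Longrightarrow> 10 * bin_hi e d \<le> 11 * bin_lo e d"
  unfolding bin_lo_def bin_hi_def by simp

lemma ten_powr_minus_one: "10 * 10 powr (x - 1) = 10 powr (x :: real)"
  by (simp add: powr_diff)

lemma bin_hi_le_bin_lo: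
  assumes "d \<in> {10..99}" "d' \<in> {10..99}" "e < e' \<or> e = e' \<and> d < d'"
  shows "bin_hi e d \<le> bin_lo e' d'"
  using assms(3)
proof
  assume "e < e'"
  define p where "p = 10 powr (real_of_int e - 1)"
  define p' where "p' = 10 powr (real_of_int e' - 1)"
  have "0 < p" unfolding p_def by simp
  have "10 * p = 10 powr real_of_int e" unfolding p_def by (rule ten_powr_minus_one)
  also have "\<dots> \<le> p'" unfolding p'_def using \<open>e < e'\<close> by (intro powr_mono) auto
  finally have "10 * p \<le> p'" .
  have "(real d + 1) * p \<le> 100 * p" using assms(1) \<open>0 < p\<close> by (intro mult_right_mono) auto
  also have "\<dots> \<le> 10 * p'" using \<open>10 * p \<le> p'\<close> by simp
  also have "\<dots> \<le> real d' * p'" using assms(2) \<open>0 < p\<close> \<open>10 * p \<le> p'\<close>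
    by (intro mult_right_mono) auto
  finally show ?thesis unfolding bin_hi_def bin_lo_def p_def p'_def .
next
  assume "e = e' \<and> d < d'"
  then have "e' = e" "real d + 1 \<le> real d'" by auto
  then show ?thesis
    unfolding bin_hi_def bin_lo_def by (simp add: mult_right_mono)
qed

lemma in_bin_unique:
  assumes "d \<in> {10..99}" "d' \<in> {10..99}" "in_bin e d x" "in_bin e' d' x"
  shows "e = e' \<and> d = d'"
proof (rule ccontr)
  assume "\<not> (e = e' \<and> d = d')"
  then consider "e < e' \<or> e = e' \<and> d < d'" | "e' < e \<or> e' = e \<and> d' < d" by linarith
  then show False
  proof cases
    case 1
    then show False using bin_hi_le_bin_lo[OF assms(1,2) 1] assms(3,4) unfolding in_bin_def by linarith
  next
    case 2
    then show False using bin_hi_le_bin_lo[OF assms(2,1) 2] assms(3,4) unfolding in_bin_def by linarith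
  qed
qed

lemma bin_lo_mono:
  assumes "d \<in> {10..99}" "d' \<in> {10..99}" "in_bin e d x" "in_bin e' d' y" "x \<le> y"
  shows "bin_lo e d \<le> bin_lo e' d'"
proof -
  consider "e' < e \<or> e' = e \<and> d' < d" | "e < e'" | "e = e'" "d \<le> d'" by linarith
  then show ?thesis
  proof cases
    case 1
    then show ?thesis
      using bin_hi_le_bin_lo[OF assms(2,1) 1] assms(3-5) unfolding in_bin_def by linarith
  next
    case 2
    then show ?thesis using bin_hi_le_bin_lo[OF assms(1,2) disjI1[OF 2]] bin_lo_less_bin_hi[of e d]
      by linarith
  next
    case 3
    then show ?thesis unfolding bin_lo_def by (simp add: mult_right_mono)
  qed
qed

lemma bin_lo_inj:
  assumes "d \<in> {10..99}" "d' \<in> {10..99}" "bin_lo e d = bin_lo e' d'"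
  shows "e = e' \<and> d = d'"
proof -
  have "in_bin e d (bin_lo e d)" "in_bin e' d' (bin_lo e' d')"
    unfolding in_bin_def using bin_lo_less_bin_hi by auto
  then show ?thesis using in_bin_unique[OF assms(1,2)] assms(3) by simp
qed

definition bin_of :: "real \<Rightarrow> int \<times> nat" where
  "bin_of x = (\<lfloor>log 10 x\<rfloor>, nat \<lfloor>x / 10 powr (real_of_int \<lfloor>log 10 x\<rfloor> - 1)\<rfloor>)"

lemma bin_of_in_bin:
  assumes "0 < x" "bin_of x = (e, d)"
  shows "d \<in> {10..99} \<and> in_bin e d x"
proof -
  define p where "p = 10 powr (real_of_int e - 1)"
  have e: "e = \<lfloor>log 10 x\<rfloor>" and d: "d = nat \<lfloor>x / p\<rfloor>"
    using assms(2) unfolding bin_of_def p_def by auto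
  have p: "10 powr real_of_int e = 10 * p" unfolding p_def by (simp add: ten_powr_minus_one)
  have "10 powr real_of_int e \<le> 10 powr log 10 x" unfolding e by (intro powr_mono) auto
  then have "10 * p \<le> x" using assms(1) p by simp
  moreover have "10 powr log 10 x < 10 powr (real_of_int e + 1)" unfolding e
    by (subst powr_less_cancel_iff) auto
  then have "x < 100 * p" using assms(1) p by (simp add: powr_add)
  moreover have "0 < p" unfolding p_def by simp
  ultimately have "10 \<le> x / p" "x / p < 100" by (simp_all add: field_simps)
  then have "10 \<le> d" "d \<le> 99" "real d \<le> x / p" "x / p < real d + 1" unfolding d by linarith+
  then show ?thesis unfolding in_bin_def bin_lo_def bin_hi_def p_def[symmetric]
    using \<open>0 < p\<close> by (simp add: field_simps)
qed

lemma bin_of_eq_iff: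
  assumes "0 < x" "d \<in> {10..99}"
  shows "bin_of x = (e, d) \<longleftrightarrow> in_bin e d x"
  using bin_of_in_bin[OF assms(1)] in_bin_unique[OF assms(2)] by (metis prod.collapse)

definition bin_floor :: "real \<Rightarrow> real" where
  "bin_floor x = case_prod bin_lo (bin_of x)"

lemma bin_floor_eq_iff:
  assumes "0 < x" "d \<in> {10..99}"
  shows "bin_floor x = bin_lo e d \<longleftrightarrow> in_bin e d x"
proof -
  obtain e' d' where b: "bin_of x = (e', d')" by fastforce
  have "d' \<in> {10..99}" using bin_of_in_bin[OF assms(1) b] by blast
  then have "bin_floor x = bin_lo e d \<longleftrightarrow> bin_of x = (e, d)"
    unfolding bin_floor_def b using bin_lo_inj[OF _ assms(2)] by auto
  then show ?thesis using bin_of_eq_iff[OF assms] by simp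
qed

lemma mono_on_bin_floor: "mono_on {0<..} bin_floor"
proof (rule mono_onI)
  fix x y :: real assume "x \<in> {0<..}" "y \<in> {0<..}" "x \<le> y"
  obtain e d e' d' where x: "bin_of x = (e, d)" and y: "bin_of y = (e', d')" by fastforce
  have "d \<in> {10..99}" "in_bin e d x" "d' \<in> {10..99}" "in_bin e' d' y"
    using bin_of_in_bin x y \<open>x \<in> {0<..}\<close> \<open>y \<in> {0<..}\<close> by auto
  then show "bin_floor x \<le> bin_floor y"
    unfolding bin_floor_def x y using bin_lo_mono \<open>x \<le> y\<close> by simp
qed

lemma paretro_mid_in_bin: "0 < d \<Longrightarrow> in_bin e d (paretro_mid e d)"
  unfolding in_bin_def paretro_mid_def
  using harmonic_mean_bounds[OF bin_lo_pos bin_lo_less_bin_hi] by auto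

lemma fair_points_in_bin: "y \<in> set (fair_points e d k) \<Longrightarrow> in_bin e d y"
proof -
  assume "y \<in> set (fair_points e d k)"
  then obtain l where "1 \<le> l" "l \<le> k"
    and y: "y = bin_lo e d + real l / (real k + 1) * (bin_hi e d - bin_lo e d)"
    unfolding fair_points_def by auto
  define t where "t = real l / (real k + 1)"
  have "0 \<le> t" "t < 1" unfolding t_def using \<open>l \<le> k\<close> by (simp_all add: field_simps)
  moreover have "0 < bin_hi e d - bin_lo e d" using bin_lo_less_bin_hi by simp
  ultimately have "0 \<le> t * (bin_hi e d - bin_lo e d)" "t * (bin_hi e d - bin_lo e d) < bin_hi e d - bin_lo e d"
    by simp_all
  then show "in_bin e d y" unfolding in_bin_def y t_def[symmetric] by simp
qed

lemma abs_diff_in_bin_le: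
  assumes "10 \<le> d" "in_bin e d x" "in_bin e d y"
  shows "\<bar>x - y\<bar> \<le> x / 10"
  by (rule abs_diff_le_tenth[of "bin_lo e d" _ "bin_hi e d"])
    (use assms bin_width_le in \<open>auto simp: in_bin_def\<close>)

lemma abs_diff_paretro_mid_le:
  assumes "10 \<le> d" "in_bin e d x"
  shows "\<bar>x - paretro_mid e d\<bar> \<le> x / 21"
  unfolding paretro_mid_def
  by (rule abs_diff_harmonic_mean_le) (use assms bin_width_le in \<open>auto simp: in_bin_def\<close>)

lemma abs_diff_bin_midpoint_le:
  assumes "10 \<le> d" "in_bin e d x"
  shows "\<bar>x - (bin_lo e d + bin_hi e d) / 2\<bar> \<le> x / 20"
  by (rule abs_diff_midpoint_le) (use assms bin_width_le in \<open>auto simp: in_bin_def\<close>)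

lemma fair_points_one: "fair_points e d 1 = [(bin_lo e d + bin_hi e d) / 2]"
  unfolding fair_points_def by (simp add: field_simps)

lemma H_eq_length_filter: "H X e d = length (filter (in_bin e d) X)"
  unfolding H_def by (simp add: length_filter_conv_card)

lemma occ_bins_eq_image_bin_of:
  assumes "\<forall>x\<in>set X. 0 < x"
  shows "occ_bins X = bin_of ` set X"
proof -
  have occ: "(e, d) \<in> occ_bins X \<longleftrightarrow> (\<exists>x\<in>set X. bin_of x = (e, d))" for e d
  proof -
    have "(e, d) \<in> occ_bins X \<longleftrightarrow> d \<in> {10..99} \<and> (\<exists>x\<in>set X. in_bin e d x)"
      unfolding occ_bins_def H_eq_length_filter by (auto simp: filter_empty_conv)
    also have "\<dots> \<longleftrightarrow> (\<exists>x\<in>set X. bin_of x = (e, d))"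
      using assms bin_of_in_bin[of _ e d] bin_of_eq_iff[of _ d e] by auto
    finally show ?thesis .
  qed
  show ?thesis
  proof (intro set_eqI)
    fix b :: "int \<times> nat"
    obtain e d where "b = (e, d)" by fastforce
    moreover have "b \<in> bin_of ` set X \<longleftrightarrow> (\<exists>x\<in>set X. bin_of x = b)" by blast
    ultimately show "b \<in> occ_bins X \<longleftrightarrow> b \<in> bin_of ` set X" using occ by simp
  qed
qed

lemma H_eq_length_filter_bin_of:
  assumes "\<forall>x\<in>set X. 0 < x" "d \<in> {10..99}"
  shows "H X e d = length (filter (\<lambda>x. bin_of x = (e, d)) X)"
  unfolding H_eq_length_filter using assms bin_of_eq_iff
  by (intro arg_cong[where f = length] filter_cong) auto

lemma image_mset_bin_floor:
  assumes "\<forall>x\<in>set X. 0 < x"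
  shows "image_mset bin_floor (mset X) = (\<Sum>(e, d)\<in>occ_bins X. replicate_mset (H X e d) (bin_lo e d))"
proof -
  have fin: "finite (occ_bins X)" using occ_bins_eq_image_bin_of[OF assms] by simp
  have "mset X = (\<Sum>b\<in>occ_bins X. mset (filter (\<lambda>x. bin_of x = b) X))"
    using mset_eq_sum_fibres[OF fin equalityD2[OF occ_bins_eq_image_bin_of[OF assms]]] .
  then have "image_mset bin_floor (mset X)
      = image_mset bin_floor (\<Sum>b\<in>occ_bins X. mset (filter (\<lambda>x. bin_of x = b) X))"
    by (rule arg_cong)
  also have "\<dots> = (\<Sum>b\<in>occ_bins X. image_mset bin_floor (mset (filter (\<lambda>x. bin_of x = b) X)))"
    by (rule image_mset_sum)
  also have "\<dots> = (\<Sum>(e, d)\<in>occ_bins X. replicate_mset (H X e d) (bin_lo e d))"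
  proof (intro sum.cong refl)
    fix b assume "b \<in> occ_bins X"
    moreover obtain e d where b: "b = (e, d)" by fastforce
    ultimately have "d \<in> {10..99}" unfolding occ_bins_def by simp
    then show "image_mset bin_floor (mset (filter (\<lambda>x. bin_of x = b) X))
        = (case b of (e, d) \<Rightarrow> replicate_mset (H X e d) (bin_lo e d))"
      unfolding b prod.case H_eq_length_filter_bin_of[OF assms \<open>d \<in> {10..99}\<close>]
      by (intro image_mset_eq_replicate_mset) (simp add: bin_floor_def)
  qed
  finally show ?thesis .
qed

definition bin_resampler :: "(int \<Rightarrow> nat \<Rightarrow> nat \<Rightarrow> real list) \<Rightarrow> bool" where
  "bin_resampler pts \<longleftrightarrow>
     (\<forall>e d k. d \<in> {10..99} \<longrightarrow> length (pts e d k) = k \<and> (\<forall>y\<in>set (pts e d k). in_bin e d y))"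

definition bin_resample :: "(int \<Rightarrow> nat \<Rightarrow> nat \<Rightarrow> real list) \<Rightarrow> real list \<Rightarrow> real multiset" where
  "bin_resample pts X = (\<Sum>(e, d)\<in>occ_bins X. mset (pts e d (H X e d)))"

lemma image_mset_bin_floor_bin_resample:
  assumes "bin_resampler pts" "\<forall>x\<in>set X. 0 < x"
  shows "image_mset bin_floor (bin_resample pts X) = image_mset bin_floor (mset X)"
proof -
  have "image_mset bin_floor (bin_resample pts X)
      = (\<Sum>(e, d)\<in>occ_bins X. image_mset bin_floor (mset (pts e d (H X e d))))"
    unfolding bin_resample_def image_mset_sum by (simp add: case_prod_unfold)
  also have "\<dots> = (\<Sum>(e, d)\<in>occ_bins X. replicate_mset (H X e d) (bin_lo e d))"
  proof (intro sum.cong refl)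
    fix b assume "b \<in> occ_bins X"
    moreover obtain e d where b: "b = (e, d)" by fastforce
    ultimately have d: "d \<in> {10..99}" unfolding occ_bins_def by simp
    have "bin_floor y = bin_lo e d" if "y \<in> set (pts e d (H X e d))" for y
    proof -
      have "in_bin e d y" using assms(1) d that unfolding bin_resampler_def by blast
      moreover then have "0 < y" using bin_lo_pos[of d e] d unfolding in_bin_def by simp
      ultimately show ?thesis using bin_floor_eq_iff d by blast
    qed
    moreover have "length (pts e d (H X e d)) = H X e d"
      using assms(1) d unfolding bin_resampler_def by blast
    ultimately show "(case b of (e, d) \<Rightarrow> image_mset bin_floor (mset (pts e d (H X e d))))
        = (case b of (e, d) \<Rightarrow> replicate_mset (H X e d) (bin_lo e d))"
      unfolding b using image_mset_eq_replicate_mset[of "pts e d (H X e d)" bin_floor] by simp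
  qed
  also have "\<dots> = image_mset bin_floor (mset X)" using image_mset_bin_floor[OF assms(2)] ..
  finally show ?thesis .
qed

lemma mem_bin_resample:
  assumes "\<forall>x\<in>set X. 0 < x" "y \<in># bin_resample pts X"
  shows "\<exists>e d. (e, d) \<in> occ_bins X \<and> y \<in> set (pts e d (H X e d))"
proof -
  have "finite (occ_bins X)" using occ_bins_eq_image_bin_of[OF assms(1)] by simp
  then obtain b where "b \<in> occ_bins X" "y \<in> set (case b of (e, d) \<Rightarrow> pts e d (H X e d))"
    using assms(2) unfolding bin_resample_def by (auto simp: set_mset_sum)
  then show ?thesis by (cases b) auto
qed

lemma Q1_bin_resample_same_bin:
  assumes "bin_resampler pts" "X \<noteq> []" "\<forall>x\<in>set X. 0 < x" "q \<le> 1"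
  shows "\<exists>e d. d \<in> {10..99} \<and> in_bin e d (Q1 q X)
    \<and> Q1 q (sorted_list_of_multiset (bin_resample pts X)) \<in> set (pts e d (H X e d))"
proof -
  define Y where "Y = sorted_list_of_multiset (bin_resample pts X)"
  have in_bins: "\<exists>e d. d \<in> {10..99} \<and> in_bin e d y \<and> y \<in> set (pts e d (H X e d))"
    if "y \<in> set Y" for y
  proof -
    have "y \<in># bin_resample pts X" using that unfolding Y_def by simp
    then obtain e d where "(e, d) \<in> occ_bins X" "y \<in> set (pts e d (H X e d))"
      using mem_bin_resample[OF assms(3)] by blast
    moreover have "d \<in> {10..99}" using \<open>(e, d) \<in> occ_bins X\<close> by (simp add: occ_bins_def)
    ultimately show ?thesis using assms(1) unfolding bin_resampler_def by blast
  qed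
  have "set Y \<subseteq> {0<..}"
  proof
    fix y assume "y \<in> set Y"
    then obtain e d where "d \<in> {10..99}" "in_bin e d y" using in_bins by blast
    then show "y \<in> {0<..}" using bin_lo_pos[of d e] unfolding in_bin_def by simp
  qed
  have img: "image_mset bin_floor (mset X) = image_mset bin_floor (mset Y)"
    unfolding Y_def using image_mset_bin_floor_bin_resample[OF assms(1,3)] by simp
  then have "length Y = length X" by (metis size_image_mset size_mset)
  then have "Y \<noteq> []" using assms(2) by auto
  then have QY: "Q1 q Y \<in> set Y" by (rule Q1_in_set[OF _ assms(4)])
  have QX: "Q1 q X \<in> set X" using Q1_in_set[OF assms(2,4)] .
  obtain e d where d: "d \<in> {10..99}" "in_bin e d (Q1 q Y)" "Q1 q Y \<in> set (pts e d (H X e d))"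
    using in_bins[OF QY] by blast
  have "set X \<subseteq> {0<..}" using assms(3) by auto
  then have "bin_floor (Q1 q X) = bin_floor (Q1 q Y)"
    by (rule Q1_image_eq[OF mono_on_bin_floor _ \<open>set Y \<subseteq> {0<..}\<close> img assms(2,4)])
  also have "\<dots> = bin_lo e d"
    using bin_floor_eq_iff[of "Q1 q Y" d e] d(1,2) QY \<open>set Y \<subseteq> {0<..}\<close> by auto
  finally have "in_bin e d (Q1 q X)"
    using bin_floor_eq_iff[of "Q1 q X" d e] d(1) QX assms(3) by auto
  then show ?thesis using d unfolding Y_def by blast
qed

lemma resample_p_eq_bin_resample:
  "resample_p X = sorted_list_of_multiset (bin_resample (\<lambda>e d k. replicate k (paretro_mid e d)) X)"
  unfolding resample_p_def bin_resample_def by simp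

lemma resample_f_eq_bin_resample:
  "resample_f X = sorted_list_of_multiset (bin_resample fair_points X)"
  unfolding resample_f_def bin_resample_def ..

lemma bin_resampler_paretro_mid: "bin_resampler (\<lambda>e d k. replicate k (paretro_mid e d))"
  unfolding bin_resampler_def using paretro_mid_in_bin by simp

lemma bin_resampler_fair_points: "bin_resampler fair_points"
  unfolding bin_resampler_def using fair_points_in_bin by (simp add: fair_points_def)

theorem mainTheorem11:
  fixes X :: "real list" and q :: real
  assumes "length X > 0"
    and "\<forall>x \<in> set X. x > 0"
    and "0 < q" and "q \<le> 1"
  shows "\<bar>Q1 q X - Q1 q (resample_p X)\<bar> \<le> Q1 q X / 21
    \<and> \<bar>Q1 q X - Q1 q (resample_f X)\<bar> \<le> Q1 q X / 10
    \<and> ((\<exists>e d. d \<in> {10..99} \<and> in_bin e d (Q1 q X) \<and> H X e d = 1) \<longrightarrow>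
         \<bar>Q1 q X - Q1 q (resample_f X)\<bar> \<le> Q1 q X / 20)"
proof -
  have X: "X \<noteq> []" using assms(1) by simp
  obtain e d where p: "d \<in> {10..99}" "in_bin e d (Q1 q X)" "Q1 q (resample_p X) = paretro_mid e d"
    using Q1_bin_resample_same_bin[OF bin_resampler_paretro_mid X assms(2,4)]
    unfolding resample_p_eq_bin_resample by fastforce
  obtain e' d' where f: "d' \<in> {10..99}" "in_bin e' d' (Q1 q X)"
    "Q1 q (resample_f X) \<in> set (fair_points e' d' (H X e' d'))"
    using Q1_bin_resample_same_bin[OF bin_resampler_fair_points X assms(2,4)]
    unfolding resample_f_eq_bin_resample by blast
  have "\<bar>Q1 q X - Q1 q (resample_p X)\<bar> \<le> Q1 q X / 21"
    using abs_diff_paretro_mid_le p by simp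
  moreover have "\<bar>Q1 q X - Q1 q (resample_f X)\<bar> \<le> Q1 q X / 10"
    using abs_diff_in_bin_le[OF _ f(2) fair_points_in_bin[OF f(3)]] f(1) by simp
  moreover have "\<bar>Q1 q X - Q1 q (resample_f X)\<bar> \<le> Q1 q X / 20"
    if "d1 \<in> {10..99}" "in_bin e1 d1 (Q1 q X)" "H X e1 d1 = 1" for e1 d1
  proof -
    have "H X e' d' = 1" using in_bin_unique[OF that(1) f(1) that(2) f(2)] that(3) by simp
    then have mid: "Q1 q (resample_f X) = (bin_lo e' d' + bin_hi e' d') / 2"
      using f(3) unfolding \<open>H X e' d' = 1\<close> fair_points_one by simp
    show ?thesis unfolding mid using abs_diff_bin_midpoint_le[OF _ f(2)] f(1) by simp
  qed
  ultimately show ?thesis by blast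
qed

end
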